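(* For every $n\equiv 1 \pmod{16}$ with $n\geq 17$, there exists an almost 2-perfect 8-cycle system of order $n$.
   Context: An 8-cycle system of order $n$ is a collection of pairwise edge-disjoint 8-cycles partitioning the edge set of $K_n$. For an 8-cycle $C$, an inside 8-cycle of $C$ is an 8-cycle on the same vertex set as $C$ sharing no edge with $C$. An 8-cycle system $\mathcal{C}$ is almost 2-perfect if one can choose, for each $C\in\mathcal{C}$, an inside 8-cycle $C'$ of $C$ so that the chosen cycles again form an 8-cycle system of order $n$. *)

theory Defs
  imports Main
begin

definition edges_Kn :: "nat \<Rightarrow> nat set set" where
  "edges_Kn n = {e. \<exists>u v. u < n \<and> v < n \<and> u \<noteq> v \<and> e = {u, v}}"

definition cyc_edges :: "nat list \<Rightarrow> nat set set" where
  "cyc_edges vs = {{vs ! i, vs ! ((i + 1) mod length vs)} | i. i < length vs}"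

definition is_8cycle :: "nat set set \<Rightarrow> bool" where
  "is_8cycle C \<longleftrightarrow> (\<exists>vs. length vs = 8 \<and> distinct vs \<and> C = cyc_edges vs)"

definition cyc_verts :: "nat set set \<Rightarrow> nat set" where
  "cyc_verts C = \<Union>C"

definition is_8cycle_system :: "nat \<Rightarrow> nat set set set \<Rightarrow> bool" where
  "is_8cycle_system n \<C> \<longleftrightarrow>
     (\<forall>C\<in>\<C>. is_8cycle C) \<and>
     (\<forall>C\<in>\<C>. \<forall>D\<in>\<C>. C \<noteq> D \<longrightarrow> C \<inter> D = {}) \<and>
     \<Union>\<C> = edges_Kn n"

definition inside_8cycle :: "nat set set \<Rightarrow> nat set set \<Rightarrow> bool" where
  "inside_8cycle C C' \<longleftrightarrow> is_8cycle C' \<and> cyc_verts C' = cyc_verts C \<and> C \<inter> C' = {}"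

definition almost_2perfect :: "nat \<Rightarrow> nat set set set \<Rightarrow> bool" where
  "almost_2perfect n \<C> \<longleftrightarrow>
     (\<exists>f. (\<forall>C\<in>\<C>. inside_8cycle C (f C)) \<and>
          inj_on f \<C> \<and> is_8cycle_system n (f ` \<C>))"

end

theory Submission
  imports Defs
begin

text \<open>Write n = 16k + 1 and split the vertices into k groups {16g..<16g+16} and the common
  point 16k. Each group together with the common point spans a K_17, which is decomposed by the
  17 translates mod 17 of a base 8-cycle whose 16 oriented differences are exactly the nonzero
  residues; a second such base cycle on the same vertex set, edge-disjoint from the first,
  supplies the inside cycles translate by translate. The edges between two groups split into
  16 copies of K_{4,4}, one for each pair of quarters of the two groups, and K_{4,4} is the union
  of two edge-disjoint 8-cycles on the same vertices, each of which is an inside cycle of the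
  other.\<close>

lemma cyc_edges_eq_image: "cyc_edges vs = (\<lambda>i. {vs ! i, vs ! (Suc i mod length vs)}) ` {..<length vs}"
  unfolding cyc_edges_def by auto

lemma Suc_mod_length_less: "i < length xs \<Longrightarrow> Suc i mod length xs < length xs"
  by (rule mod_less_divisor) auto

lemma cyc_edges_map: "cyc_edges (map f vs) = image f ` cyc_edges vs"
  unfolding cyc_edges_eq_image length_map image_image
  by (rule image_cong) (simp_all add: Suc_mod_length_less)

lemma cyc_verts_cyc_edges: "cyc_verts (cyc_edges vs) = set vs"
proof
  show "cyc_verts (cyc_edges vs) \<subseteq> set vs"
    unfolding cyc_verts_def cyc_edges_eq_image by (auto intro: nth_mem simp: Suc_mod_length_less)
  show "set vs \<subseteq> cyc_verts (cyc_edges vs)"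
    unfolding cyc_verts_def cyc_edges_eq_image by (auto simp: in_set_conv_nth)
qed

lemma is_8cycle_nonempty: "is_8cycle C \<Longrightarrow> C \<noteq> {}"
  unfolding is_8cycle_def cyc_edges_eq_image by (auto simp: lessThan_empty_iff)

lemma is_8cycle_image:
  assumes "is_8cycle C" "inj_on f (cyc_verts C)"
  shows "is_8cycle (image f ` C)"
proof -
  obtain vs where vs: "length vs = 8" "distinct vs" "C = cyc_edges vs"
    using assms(1) unfolding is_8cycle_def by blast
  have "distinct (map f vs)"
    using assms(2) vs by (simp add: distinct_map cyc_verts_cyc_edges)
  then show ?thesis
    unfolding is_8cycle_def using vs by (intro exI[of _ "map f vs"]) (simp add: cyc_edges_map)
qed

lemma inside_8cycle_image:
  assumes inside: "inside_8cycle C D" and inj: "inj_on f (cyc_verts C)"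
  shows "inside_8cycle (image f ` C) (image f ` D)"
proof -
  have D: "is_8cycle D" and verts: "cyc_verts D = cyc_verts C" and disj: "C \<inter> D = {}"
    using inside unfolding inside_8cycle_def by auto
  have sub: "C \<subseteq> Pow (cyc_verts C)" "D \<subseteq> Pow (cyc_verts C)"
    using verts unfolding cyc_verts_def by auto
  have "image f ` C \<inter> image f ` D = {}"
    using inj_on_image_Int[OF inj_on_image_Pow[OF inj] sub] disj by simp
  moreover have "cyc_verts (image f ` D) = cyc_verts (image f ` C)"
    using verts unfolding cyc_verts_def by blast
  moreover have "is_8cycle (image f ` D)"
    using is_8cycle_image[OF D] inj verts by simp
  ultimately show ?thesis
    unfolding inside_8cycle_def by blast
qed

lemma inside_8cycle_sym: "is_8cycle C \<Longrightarrow> inside_8cycle C D \<Longrightarrow> inside_8cycle D C"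
  unfolding inside_8cycle_def by auto

lemma is_8cycle_cyc_edges: "length vs = 8 \<Longrightarrow> distinct vs \<Longrightarrow> is_8cycle (cyc_edges vs)"
  unfolding is_8cycle_def by blast

lemma inside_8cycle_cyc_edges:
  assumes "length ws = 8" "distinct ws" "set ws = set vs" "cyc_edges vs \<inter> cyc_edges ws = {}"
  shows "inside_8cycle (cyc_edges vs) (cyc_edges ws)"
  unfolding inside_8cycle_def cyc_verts_cyc_edges using assms is_8cycle_cyc_edges by blast

lemma cyc_edges_8:
  "cyc_edges [a0, a1, a2, a3, a4, a5, a6, a7] =
    {{a0, a1}, {a1, a2}, {a2, a3}, {a3, a4}, {a4, a5}, {a5, a6}, {a6, a7}, {a7, a0}}"
proof -
  have len: "length [a0, a1, a2, a3, a4, a5, a6, a7] = 8" by simp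
  have eight: "{..<8::nat} = {0, 1, 2, 3, 4, 5, 6, 7}" by auto
  show ?thesis unfolding cyc_edges_eq_image len eight by simp
qed

definition complete_edges :: "'a set \<Rightarrow> 'a set set" where
  "complete_edges V = {{u, v} | u v. u \<in> V \<and> v \<in> V \<and> u \<noteq> v}"

definition bipartite_edges :: "'a set \<Rightarrow> 'a set \<Rightarrow> 'a set set" where
  "bipartite_edges X Y = {{x, y} | x y. x \<in> X \<and> y \<in> Y}"

lemma edges_Kn_eq_complete_edges: "edges_Kn n = complete_edges {..<n}"
  unfolding edges_Kn_def complete_edges_def by auto

lemma doubleton_in_complete_edges:
  "u \<noteq> v \<Longrightarrow> {u, v} \<in> complete_edges V \<longleftrightarrow> u \<in> V \<and> v \<in> V"
  unfolding complete_edges_def by (auto simp: doubleton_eq_iff)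

lemma doubleton_in_bipartite_edges:
  "{u, v} \<in> bipartite_edges X Y \<longleftrightarrow> u \<in> X \<and> v \<in> Y \<or> v \<in> X \<and> u \<in> Y"
  unfolding bipartite_edges_def by (auto simp: doubleton_eq_iff)

lemma image_complete_edges:
  assumes "inj_on f V"
  shows "image f ` complete_edges V = complete_edges (f ` V)"
proof -
  have "image f ` complete_edges V = {{f u, f v} | u v. u \<in> V \<and> v \<in> V \<and> u \<noteq> v}"
    unfolding complete_edges_def by (auto intro!: image_eqI[where x="{_, _}"])
  also have "\<dots> = complete_edges (f ` V)"
    unfolding complete_edges_def using assms by (blast dest: inj_onD)
  finally show ?thesis .
qed

lemma image_bipartite_edges: "image f ` bipartite_edges X Y = bipartite_edges (f ` X) (f ` Y)"
proof -
  have "image f ` bipartite_edges X Y = {{f x, f y} | x y. x \<in> X \<and> y \<in> Y}"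
    unfolding bipartite_edges_def by (auto intro!: image_eqI[where x="{_, _}"])
  also have "\<dots> = bipartite_edges (f ` X) (f ` Y)"
    unfolding bipartite_edges_def by auto
  finally show ?thesis .
qed

lemma Union_complete_edges: "\<Union>(complete_edges V) \<subseteq> V"
  unfolding complete_edges_def by auto

lemma Union_bipartite_edges: "\<Union>(bipartite_edges X Y) \<subseteq> X \<union> Y"
  unfolding bipartite_edges_def by auto

lemma complete_edges_mono: "V \<subseteq> W \<Longrightarrow> complete_edges V \<subseteq> complete_edges W"
  unfolding complete_edges_def by blast

lemma bipartite_edges_subset_complete_edges:
  "X \<inter> Y = {} \<Longrightarrow> X \<union> Y \<subseteq> V \<Longrightarrow> bipartite_edges X Y \<subseteq> complete_edges V"
  unfolding bipartite_edges_def complete_edges_def by blast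

lemma complete_edges_lessThan_ordered:
  fixes n :: nat
  assumes "e \<in> complete_edges {..<n}"
  obtains u v where "u < v" "v < n" "e = {u, v}"
proof -
  obtain x y where xy: "x < n" "y < n" "x \<noteq> y" "e = {x, y}"
    using assms unfolding complete_edges_def by auto
  show ?thesis
  proof (cases "x < y")
    case True
    then show ?thesis using that xy by blast
  next
    case False
    then have "y < x" using xy(3) by simp
    then show ?thesis using that[of y x] xy by (simp add: insert_commute)
  qed
qed

definition decomposition :: "'i set \<Rightarrow> ('i \<Rightarrow> 'a set) \<Rightarrow> 'a set \<Rightarrow> bool" where
  "decomposition I A E \<longleftrightarrow> (\<forall>i\<in>I. A i \<subseteq> E) \<and> (\<forall>e\<in>E. \<exists>!i\<in>I. e \<in> A i)"

lemma decomposition_subset: "decomposition I A E \<Longrightarrow> i \<in> I \<Longrightarrow> A i \<subseteq> E"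
  unfolding decomposition_def by blast

lemma decomposition_cover: "decomposition I A E \<Longrightarrow> e \<in> E \<Longrightarrow> \<exists>i\<in>I. e \<in> A i"
  unfolding decomposition_def by blast

lemma decomposition_unique:
  "decomposition I A E \<Longrightarrow> i \<in> I \<Longrightarrow> j \<in> I \<Longrightarrow> e \<in> A i \<Longrightarrow> e \<in> A j \<Longrightarrow> i = j"
  unfolding decomposition_def by blast

lemma decompositionI:
  assumes "\<And>i. i \<in> I \<Longrightarrow> A i \<subseteq> E" "\<And>e. e \<in> E \<Longrightarrow> \<exists>i\<in>I. e \<in> A i"
    "\<And>i j e. i \<in> I \<Longrightarrow> j \<in> I \<Longrightarrow> e \<in> A i \<Longrightarrow> e \<in> A j \<Longrightarrow> i = j"
  shows "decomposition I A E"
  unfolding decomposition_def using assms by blast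

lemma decomposition_image:
  assumes dec: "decomposition I A E" and inj: "inj_on f E"
  shows "decomposition I (\<lambda>i. f ` A i) (f ` E)"
proof (rule decompositionI)
  show "f ` A i \<subseteq> f ` E" if "i \<in> I" for i
    using decomposition_subset[OF dec that] by blast
  show "\<exists>i\<in>I. e' \<in> f ` A i" if "e' \<in> f ` E" for e'
    using that decomposition_cover[OF dec] by blast
  fix i j e' assume ij: "i \<in> I" "j \<in> I" and "e' \<in> f ` A i" "e' \<in> f ` A j"
  then obtain d d' where d: "d \<in> A i" "d' \<in> A j" "f d = f d'" by auto
  moreover have "d \<in> E" "d' \<in> E" using decomposition_subset[OF dec] ij d by blast+
  ultimately have "d = d'" using inj by (meson inj_onD)
  then show "i = j" using decomposition_unique[OF dec ij] d by blast
qed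

lemma decomposition_Sigma:
  assumes blocks: "decomposition J X E" and parts: "\<And>j. j \<in> J \<Longrightarrow> decomposition (I j) (A j) (X j)"
  shows "decomposition (Sigma J I) (\<lambda>(j, i). A j i) E"
proof (rule decompositionI)
  show "(case ji of (j, i) \<Rightarrow> A j i) \<subseteq> E" if "ji \<in> Sigma J I" for ji
    using that decomposition_subset[OF blocks] decomposition_subset[OF parts] by fastforce
  show "\<exists>ji\<in>Sigma J I. e \<in> (case ji of (j, i) \<Rightarrow> A j i)" if e: "e \<in> E" for e
  proof -
    obtain j where "j \<in> J" "e \<in> X j" using decomposition_cover[OF blocks e] by blast
    moreover obtain i where "i \<in> I j" "e \<in> A j i"
      using decomposition_cover[OF parts] calculation by blast
    ultimately show ?thesis by blast
  qed
  fix ji ji' e assume "ji \<in> Sigma J I" "ji' \<in> Sigma J I"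
    "e \<in> (case ji of (j, i) \<Rightarrow> A j i)" "e \<in> (case ji' of (j, i) \<Rightarrow> A j i)"
  then obtain j i j' i' where ji: "ji = (j, i)" "ji' = (j', i')" "j \<in> J" "j' \<in> J" "i \<in> I j" "i' \<in> I j'"
      and e: "e \<in> A j i" "e \<in> A j' i'"
    by auto
  have "e \<in> X j" "e \<in> X j'" using decomposition_subset[OF parts] ji e by blast+
  then have "j' = j" using decomposition_unique[OF blocks] ji by blast
  then show "ji = ji'" using decomposition_unique[OF parts] ji e by blast
qed

lemma decomposition_pair:
  assumes "A \<inter> B = {}" "A \<union> B = E"
  shows "decomposition {..<2} (nth [A, B]) E"
proof (rule decompositionI)
  have two: "i \<in> {..<2} \<longleftrightarrow> i = 0 \<or> i = Suc 0" for i :: nat by auto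
  show "[A, B] ! i \<subseteq> E" if "i \<in> {..<2}" for i
    using that assms(2) unfolding two by auto
  show "\<exists>i\<in>{..<2}. e \<in> [A, B] ! i" if "e \<in> E" for e
  proof -
    have "e \<in> [A, B] ! 0 \<or> e \<in> [A, B] ! Suc 0" using that assms(2) by auto
    then show ?thesis by (elim disjE) (rule bexI, assumption, simp)+
  qed
  show "i = j" if "i \<in> {..<2}" "j \<in> {..<2}" "e \<in> [A, B] ! i" "e \<in> [A, B] ! j" for i j e
    using that assms(1) unfolding two by auto
qed

lemma inj_on_decomposition:
  assumes "decomposition I A E" "\<And>i. i \<in> I \<Longrightarrow> A i \<noteq> {}"
  shows "inj_on A I"
proof (rule inj_onI)
  fix i j assume ij: "i \<in> I" "j \<in> I" "A i = A j"
  obtain e where "e \<in> A i" using assms(2) ij(1) by blast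
  then show "i = j" using decomposition_unique[OF assms(1) ij(1,2)] ij(3) by simp
qed

lemma is_8cycle_system_decomposition:
  assumes dec: "decomposition I A (edges_Kn n)" and cyc: "\<And>i. i \<in> I \<Longrightarrow> is_8cycle (A i)"
  shows "is_8cycle_system n (A ` I)"
  unfolding is_8cycle_system_def
proof (intro conjI ballI impI)
  show "is_8cycle C" if "C \<in> A ` I" for C using that cyc by blast
  show "C \<inter> D = {}" if "C \<in> A ` I" "D \<in> A ` I" "C \<noteq> D" for C D
    using that decomposition_unique[OF dec] by blast
  show "\<Union>(A ` I) = edges_Kn n"
    using decomposition_subset[OF dec] decomposition_cover[OF dec] by blast
qed

definition almost_2perfect_decomposition ::
    "'i set \<Rightarrow> ('i \<Rightarrow> nat set set) \<Rightarrow> ('i \<Rightarrow> nat set set) \<Rightarrow> nat set set \<Rightarrow> bool" where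
  "almost_2perfect_decomposition I A B E \<longleftrightarrow>
     decomposition I A E \<and> decomposition I B E \<and> (\<forall>i\<in>I. is_8cycle (A i) \<and> inside_8cycle (A i) (B i))"

lemma almost_2perfect_decomposition_image:
  assumes dec: "almost_2perfect_decomposition I A B E" and inj: "inj_on f (\<Union>E)"
  shows "almost_2perfect_decomposition I (\<lambda>i. image f ` A i) (\<lambda>i. image f ` B i) (image f ` E)"
proof -
  have inj_E: "inj_on (image f) E"
    using inj_on_image_Pow[OF inj] by (rule inj_on_subset) blast
  have decA: "decomposition I A E" and decB: "decomposition I B E"
    and cyc: "\<And>i. i \<in> I \<Longrightarrow> is_8cycle (A i) \<and> inside_8cycle (A i) (B i)"
    using dec unfolding almost_2perfect_decomposition_def by auto
  have inj_i: "inj_on f (cyc_verts (A i))" if "i \<in> I" for i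
  proof (rule inj_on_subset[OF inj])
    show "cyc_verts (A i) \<subseteq> \<Union>E"
      using decomposition_subset[OF decA that] unfolding cyc_verts_def by blast
  qed
  show ?thesis
    unfolding almost_2perfect_decomposition_def
    using decomposition_image[OF decA inj_E] decomposition_image[OF decB inj_E]
      is_8cycle_image[OF conjunct1[OF cyc] inj_i] inside_8cycle_image[OF conjunct2[OF cyc] inj_i]
    by blast
qed

lemma almost_2perfect_decomposition_Sigma:
  assumes "decomposition J X E" "\<And>j. j \<in> J \<Longrightarrow> almost_2perfect_decomposition (I j) (A j) (B j) (X j)"
  shows "almost_2perfect_decomposition (Sigma J I) (\<lambda>(j, i). A j i) (\<lambda>(j, i). B j i) E"
  using assms decomposition_Sigma[of J X E I] unfolding almost_2perfect_decomposition_def by auto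

lemma almost_2perfect_decomposition_pair:
  assumes "is_8cycle C" "inside_8cycle C D" "C \<union> D = E"
  shows "almost_2perfect_decomposition {..<2} (nth [C, D]) (nth [D, C]) E"
proof -
  have "C \<inter> D = {}" using assms(2) unfolding inside_8cycle_def by blast
  then have "decomposition {..<2} (nth [C, D]) E" "decomposition {..<2} (nth [D, C]) E"
    using assms(3) decomposition_pair[of C D] decomposition_pair[of D C] by (simp_all add: Int_commute Un_commute)
  moreover have "is_8cycle ([C, D] ! i) \<and> inside_8cycle ([C, D] ! i) ([D, C] ! i)"
    if "i \<in> {..<2}" for i
  proof -
    have "is_8cycle D" "inside_8cycle D C"
      using assms(1,2) inside_8cycle_sym unfolding inside_8cycle_def by blast+
    moreover have "i = 0 \<or> i = Suc 0" using that by auto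
    ultimately show ?thesis using assms(1,2) by auto
  qed
  ultimately show ?thesis
    unfolding almost_2perfect_decomposition_def by blast
qed

lemma almost_2perfect_system_of_decomposition:
  assumes "almost_2perfect_decomposition I A B (edges_Kn n)"
  shows "\<exists>\<C>. is_8cycle_system n \<C> \<and> almost_2perfect n \<C>"
proof -
  have decA: "decomposition I A (edges_Kn n)" and decB: "decomposition I B (edges_Kn n)"
    and cycA: "\<And>i. i \<in> I \<Longrightarrow> is_8cycle (A i)"
    and inside: "\<And>i. i \<in> I \<Longrightarrow> inside_8cycle (A i) (B i)"
    using assms unfolding almost_2perfect_decomposition_def by auto
  have cycB: "\<And>i. i \<in> I \<Longrightarrow> is_8cycle (B i)"
    using inside unfolding inside_8cycle_def by blast
  have injA: "inj_on A I" and injB: "inj_on B I"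
    using inj_on_decomposition decA decB cycA cycB is_8cycle_nonempty by blast+
  define f where "f = B \<circ> the_inv_into I A"
  have f: "f (A i) = B i" if "i \<in> I" for i
    using the_inv_into_f_f[OF injA that] unfolding f_def by simp
  have "inj_on f (A ` I)"
    using injB f unfolding inj_on_def by auto
  moreover have "f ` A ` I = B ` I"
    using f by (force simp: image_iff)
  ultimately have "almost_2perfect n (A ` I)"
    unfolding almost_2perfect_def
    using f inside is_8cycle_system_decomposition[OF decB cycB] by (intro exI[of _ f]) auto
  then show ?thesis
    using is_8cycle_system_decomposition[OF decA cycA] by blast
qed

section \<open>Cyclic decompositions of K_m by translates of a base cycle\<close>

lemma mod_add_left_cancel:
  fixes m p c c' :: nat
  assumes "c < m" "c' < m" "(p + c) mod m = (p + c') mod m"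
  shows "c = c'"
proof -
  have "(int p + int c) mod int m = (int p + int c') mod int m"
    using assms(3) by (metis of_nat_add of_nat_mod)
  then have "int c mod int m = int c' mod int m"
    by (metis add_diff_cancel_left' mod_diff_left_eq)
  then show ?thesis using assms(1,2) by (simp add: zmod_int)
qed

lemma mod_diff_eq_iff:
  fixes m p q d :: nat
  assumes "p < m" "q < m" "d < m"
  shows "(q + m - p) mod m = d \<longleftrightarrow> (p + d) mod m = q"
proof
  have "(p + (q + m - p) mod m) mod m = q"
    using assms(1,2) by (simp add: mod_add_right_eq)
  then show "(q + m - p) mod m = d \<Longrightarrow> (p + d) mod m = q" by simp
  assume "(p + d) mod m = q"
  then have "(p + (q + m - p) mod m) mod m = (p + d) mod m"
    using assms(1,2) by (simp add: mod_add_right_eq)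
  moreover have "(q + m - p) mod m < m" using assms(1) by simp
  ultimately show "(q + m - p) mod m = d"
    using mod_add_left_cancel assms(3) by blast
qed

lemma mod_diff_cancel_left:
  fixes m x y z :: nat
  assumes "x < m" "y < m" "z < m" "(y + m - x) mod m = (z + m - x) mod m"
  shows "y = z"
proof -
  define d where "d = (y + m - x) mod m"
  have "d < m" using assms(1) unfolding d_def by simp
  then have "(x + d) mod m = y" "(x + d) mod m = z"
    using mod_diff_eq_iff[OF assms(1,2)] mod_diff_eq_iff[OF assms(1,3)] assms(4) unfolding d_def by auto
  then show ?thesis by simp
qed

definition arc_difference :: "nat \<Rightarrow> nat \<times> nat \<Rightarrow> nat" where
  "arc_difference m a = (snd a + m - fst a) mod m"

lemma arc_difference_translate:
  fixes m p q c :: nat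
  assumes "p < m" "q < m"
  shows "arc_difference m ((p + c) mod m, (q + c) mod m) = arc_difference m (p, q)"
proof -
  define d where "d = (q + m - p) mod m"
  have m: "0 < m" using assms(1) by simp
  have "(p + d) mod m = q" using mod_diff_eq_iff[OF assms, of d] m unfolding d_def by simp
  then have "((p + c) mod m + d) mod m = (q + c) mod m"
    by (metis add.commute add.left_commute mod_add_left_eq)
  then show ?thesis
    using mod_diff_eq_iff[of "(p + c) mod m" m "(q + c) mod m" d] m
    unfolding arc_difference_def d_def by simp
qed

definition arcs :: "'a list \<Rightarrow> ('a \<times> 'a) set" where
  "arcs vs = set (zip vs (rotate1 vs) @ zip (rotate1 vs) vs)"

lemma arcs_subset: "arcs vs \<subseteq> set vs \<times> set vs"
  unfolding arcs_def by (auto dest: set_zip_leftD set_zip_rightD)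

lemma swap_in_arcs: "(p, q) \<in> arcs vs \<longleftrightarrow> (q, p) \<in> arcs vs"
  unfolding arcs_def by (auto simp: zip_commute[of "rotate1 vs" vs])

lemma cyc_edges_eq_arcs: "cyc_edges vs = (\<lambda>(x, y). {x, y}) ` arcs vs"
proof -
  have "set (zip vs (rotate1 vs)) = (\<lambda>i. (vs ! i, vs ! (Suc i mod length vs))) ` {..<length vs}"
    unfolding set_zip by (auto simp: nth_rotate1)
  then have "cyc_edges vs = (\<lambda>(x, y). {x, y}) ` set (zip vs (rotate1 vs))"
    unfolding cyc_edges_eq_image by (simp add: image_image)
  also have "\<dots> = (\<lambda>(x, y). {x, y}) ` arcs vs"
    unfolding arcs_def by (auto simp: zip_commute[of "rotate1 vs" vs] insert_commute)
  finally show ?thesis .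
qed

definition translate :: "nat \<Rightarrow> nat \<Rightarrow> nat list \<Rightarrow> nat list" where
  "translate m c b = map (\<lambda>x. (x + c) mod m) b"

lemma inj_on_translate: "inj_on (\<lambda>x. (x + c) mod m) {..<m::nat}"
  by (rule inj_onI) (simp add: mod_add_left_cancel add.commute[of _ c])

lemma mem_cyc_edges_translate:
  "e \<in> cyc_edges (translate m c b) \<longleftrightarrow> (\<exists>(p, q) \<in> arcs b. e = {(p + c) mod m, (q + c) mod m})"
  unfolding translate_def cyc_edges_map unfolding cyc_edges_eq_arcs image_image by auto

lemma doubleton_in_cyc_edges_translate:
  "{x, y} \<in> cyc_edges (translate m c b) \<longleftrightarrow>
     (\<exists>(p, q) \<in> arcs b. (p + c) mod m = x \<and> (q + c) mod m = y)"
  unfolding mem_cyc_edges_translate doubleton_eq_iff using swap_in_arcs by fast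

definition differences :: "nat \<Rightarrow> nat list \<Rightarrow> nat list" where
  "differences m b = map (arc_difference m) (zip b (rotate1 b) @ zip (rotate1 b) b)"

definition perfect_difference_cycle :: "nat \<Rightarrow> nat list \<Rightarrow> bool" where
  "perfect_difference_cycle m b \<longleftrightarrow>
     set b \<subseteq> {..<m} \<and> distinct (differences m b) \<and> set (differences m b) = {0<..<m}"

lemma perfect_difference_cycleD:
  assumes "perfect_difference_cycle m b"
  shows "arcs b \<subseteq> {..<m} \<times> {..<m}" "inj_on (arc_difference m) (arcs b)"
    "arc_difference m ` arcs b = {0<..<m}"
  using assms arcs_subset[of b]
  unfolding perfect_difference_cycle_def differences_def arcs_def[symmetric] distinct_map
  by (auto simp: arcs_def)

lemma translate_edges_subset:
  assumes pdc: "perfect_difference_cycle m b"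
  shows "cyc_edges (translate m c b) \<subseteq> complete_edges {..<m}"
proof
  fix e assume "e \<in> cyc_edges (translate m c b)"
  then obtain p q where pq: "(p, q) \<in> arcs b" "e = {(p + c) mod m, (q + c) mod m}"
    unfolding mem_cyc_edges_translate by blast
  have lt: "p < m" "q < m" using perfect_difference_cycleD(1)[OF pdc] pq(1) by auto
  have "arc_difference m (p, q) \<noteq> 0" using perfect_difference_cycleD(3)[OF pdc] pq(1) by force
  then have "p \<noteq> q" unfolding arc_difference_def by auto
  then have "(p + c) mod m \<noteq> (q + c) mod m"
    using inj_on_translate[of c m] lt by (auto dest: inj_onD)
  then show "e \<in> complete_edges {..<m}"
    using pq(2) lt by (simp add: doubleton_in_complete_edges)
qed

lemma translates_cover:
  assumes pdc: "perfect_difference_cycle m b" and xy: "x < m" "y < m" "x \<noteq> y"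
  shows "\<exists>c<m. {x, y} \<in> cyc_edges (translate m c b)"
proof -
  have "arc_difference m (x, y) \<noteq> 0"
    using mod_diff_eq_iff[OF xy(1,2), of 0] xy by (simp add: arc_difference_def)
  moreover have "arc_difference m (x, y) < m" using xy(1) unfolding arc_difference_def by simp
  ultimately have "arc_difference m (x, y) \<in> arc_difference m ` arcs b"
    using perfect_difference_cycleD(3)[OF pdc] by simp
  then obtain p q where pq: "(p, q) \<in> arcs b" "arc_difference m (p, q) = arc_difference m (x, y)"
    by auto
  have lt: "p < m" "q < m" using perfect_difference_cycleD(1)[OF pdc] pq(1) by auto
  define c where "c = (x + m - p) mod m"
  have c: "c < m" using xy(1) unfolding c_def by simp
  have px: "(p + c) mod m = x"
    using mod_diff_eq_iff[of p m x c] lt xy(1) c unfolding c_def by simp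
  have "arc_difference m (x, (q + c) mod m) = arc_difference m (x, y)"
    using arc_difference_translate[OF lt, of c] pq(2) px by simp
  then have "(q + c) mod m = y"
    using mod_diff_cancel_left[OF xy(1) _ xy(2)] xy(1) unfolding arc_difference_def by simp
  then show ?thesis
    using doubleton_in_cyc_edges_translate pq(1) px c by blast
qed

text \<open>An edge of a translate determines the arc of the base cycle it comes from through its
  difference, and then the shift through the image of the arc's tail.\<close>

lemma translates_unique:
  assumes pdc: "perfect_difference_cycle m b" and c: "c < m" "c' < m"
    and e: "e \<in> cyc_edges (translate m c b)" "e \<in> cyc_edges (translate m c' b)"
  shows "c = c'"
proof -
  obtain p q where pq: "(p, q) \<in> arcs b" "e = {(p + c) mod m, (q + c) mod m}"
    using e(1) unfolding mem_cyc_edges_translate by blast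
  obtain p' q' where pq': "(p', q') \<in> arcs b"
      "(p' + c') mod m = (p + c) mod m" "(q' + c') mod m = (q + c) mod m"
    using e(2) doubleton_in_cyc_edges_translate pq(2) by blast
  have lt: "p < m" "q < m" "p' < m" "q' < m"
    using perfect_difference_cycleD(1)[OF pdc] pq(1) pq'(1) by auto
  have "arc_difference m (p', q') = arc_difference m ((p' + c') mod m, (q' + c') mod m)"
    using arc_difference_translate[OF lt(3,4)] by simp
  also have "\<dots> = arc_difference m (p, q)"
    using arc_difference_translate[OF lt(1,2)] pq'(2,3) by simp
  finally have "arc_difference m (p', q') = arc_difference m (p, q)" .
  then have "p' = p"
    using perfect_difference_cycleD(2)[OF pdc] pq(1) pq'(1) by (auto dest: inj_onD)
  then show "c = c'"
    using mod_add_left_cancel c pq'(2) by metis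
qed

lemma translates_decomposition:
  assumes "perfect_difference_cycle m b"
  shows "decomposition {..<m} (\<lambda>c. cyc_edges (translate m c b)) (complete_edges {..<m})"
proof (rule decompositionI)
  show "cyc_edges (translate m c b) \<subseteq> complete_edges {..<m}" for c
    using translate_edges_subset[OF assms] .
  show "\<exists>c\<in>{..<m}. e \<in> cyc_edges (translate m c b)" if "e \<in> complete_edges {..<m}" for e
    using that translates_cover[OF assms] unfolding complete_edges_def by auto
  show "c = c'" if "c \<in> {..<m}" "c' \<in> {..<m}"
    "e \<in> cyc_edges (translate m c b)" "e \<in> cyc_edges (translate m c' b)" for c c' e
    using translates_unique[OF assms] that by simp
qed

lemma perfect_difference_cycleI:
  assumes "set b \<subseteq> {..<m}" "distinct (differences m b)" "set (differences m b) \<subseteq> {0<..<m}"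
    and "2 * length b = m - 1"
  shows "perfect_difference_cycle m b"
proof -
  have "length (differences m b) = 2 * length b"
    unfolding differences_def by simp
  then have "card {0<..<m} \<le> card (set (differences m b))"
    using distinct_card[OF assms(2)] assms(4) by simp
  then show ?thesis
    unfolding perfect_difference_cycle_def using assms(1-3) card_seteq by blast
qed

lemma translates_almost_2perfect_decomposition:
  assumes "perfect_difference_cycle m b" "perfect_difference_cycle m b'"
    and "is_8cycle (cyc_edges b)" "inside_8cycle (cyc_edges b) (cyc_edges b')"
  shows "almost_2perfect_decomposition {..<m}
    (\<lambda>c. cyc_edges (translate m c b)) (\<lambda>c. cyc_edges (translate m c b')) (complete_edges {..<m})"
proof -
  have "inj_on (\<lambda>x. (x + c) mod m) (cyc_verts (cyc_edges b))" for c
    using inj_on_subset[OF inj_on_translate] assms(1)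
    unfolding cyc_verts_cyc_edges perfect_difference_cycle_def by blast
  then show ?thesis
    unfolding almost_2perfect_decomposition_def translate_def cyc_edges_map
    using translates_decomposition[OF assms(1)] translates_decomposition[OF assms(2)]
      is_8cycle_image[OF assms(3)] inside_8cycle_image[OF assms(4)]
    by (simp add: translate_def cyc_edges_map)
qed

section \<open>The base cycles\<close>

definition base_cycle :: "nat list" where "base_cycle = [0, 1, 3, 6, 2, 7, 16, 10]"

definition inside_base_cycle :: "nat list" where "inside_base_cycle = [0, 6, 1, 16, 3, 2, 10, 7]"

lemma perfect_difference_base_cycles:
  "perfect_difference_cycle 17 base_cycle" "perfect_difference_cycle 17 inside_base_cycle"
  by (rule perfect_difference_cycleI;
      simp add: differences_def arc_difference_def base_cycle_def inside_base_cycle_def)+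

lemma base_cycles_8cycles:
  "is_8cycle (cyc_edges base_cycle)" "inside_8cycle (cyc_edges base_cycle) (cyc_edges inside_base_cycle)"
  by (rule is_8cycle_cyc_edges inside_8cycle_cyc_edges;
      simp add: base_cycle_def inside_base_cycle_def cyc_edges_8 doubleton_eq_iff insert_commute)+

definition bipartite_cycle :: "nat list" where "bipartite_cycle = [0, 4, 1, 5, 2, 6, 3, 7]"

definition inside_bipartite_cycle :: "nat list" where "inside_bipartite_cycle = [0, 5, 3, 4, 2, 7, 1, 6]"

lemma bipartite_cycles_8cycles:
  "is_8cycle (cyc_edges bipartite_cycle)"
  "inside_8cycle (cyc_edges bipartite_cycle) (cyc_edges inside_bipartite_cycle)"
  by (rule is_8cycle_cyc_edges inside_8cycle_cyc_edges;
      simp add: bipartite_cycle_def inside_bipartite_cycle_def cyc_edges_8 doubleton_eq_iff insert_commute)+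

lemma bipartite_cycles_union:
  "cyc_edges bipartite_cycle \<union> cyc_edges inside_bipartite_cycle = bipartite_edges {..<4} {4..<8::nat}"
proof
  show "cyc_edges bipartite_cycle \<union> cyc_edges inside_bipartite_cycle \<subseteq> bipartite_edges {..<4} {4..<8}"
    by (simp add: bipartite_cycle_def inside_bipartite_cycle_def cyc_edges_8 doubleton_in_bipartite_edges)
  have all: "\<forall>x\<in>{0, 1, 2, 3}. \<forall>y\<in>{4, 5, 6, 7}.
      {x, y} \<in> cyc_edges bipartite_cycle \<union> cyc_edges inside_bipartite_cycle"
    by (simp add: bipartite_cycle_def inside_bipartite_cycle_def cyc_edges_8 doubleton_eq_iff)
  show "bipartite_edges {..<4} {4..<8} \<subseteq> cyc_edges bipartite_cycle \<union> cyc_edges inside_bipartite_cycle"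
  proof
    fix e assume "e \<in> bipartite_edges {..<4} {4..<8::nat}"
    then obtain x y :: nat where xy: "x < 4" "4 \<le> y" "y < 8" "e = {x, y}"
      unfolding bipartite_edges_def by auto
    then have "x \<in> {0, 1, 2, 3}" "y \<in> {4, 5, 6, 7}" by auto
    then show "e \<in> cyc_edges bipartite_cycle \<union> cyc_edges inside_bipartite_cycle"
      using all xy(4) by blast
  qed
qed

section \<open>Gluing the blocks of K_{16k+1}\<close>

definition hub_embedding :: "nat \<Rightarrow> nat \<Rightarrow> nat \<Rightarrow> nat" where
  "hub_embedding k g x = (if x < 16 then 16 * g + x else 16 * k)"

definition pair_embedding :: "nat \<Rightarrow> nat \<Rightarrow> nat \<Rightarrow> nat" where
  "pair_embedding p q x = (if x < 4 then 4 * p + x else 4 * q + (x - 4))"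

lemma inj_on_hub_embedding: "g < k \<Longrightarrow> inj_on (hub_embedding k g) {..<17}"
  unfolding hub_embedding_def inj_on_def by auto

lemma hub_embedding_image:
  "g < k \<Longrightarrow> hub_embedding k g ` {..<17} = insert (16 * k) {16 * g..<16 * g + 16}"
proof -
  have "{..<17::nat} = {..<16} \<union> {16}" by auto
  moreover have "hub_embedding k g ` {..<16} = plus (16 * g) ` {0..<16}"
    by (rule image_cong) (auto simp: hub_embedding_def)
  ultimately show ?thesis unfolding hub_embedding_def by (auto simp: add.commute)
qed

lemma inj_on_pair_embedding: "p < q \<Longrightarrow> inj_on (pair_embedding p q) {..<8}"
  unfolding pair_embedding_def inj_on_def by auto

lemma pair_embedding_image:
  "pair_embedding p q ` {..<4} = {4 * p..<4 * p + 4}"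
  "pair_embedding p q ` {4..<8} = {4 * q..<4 * q + 4}"
proof -
  have "pair_embedding p q ` {..<4} = plus (4 * p) ` {0..<4}"
    by (rule image_cong) (auto simp: pair_embedding_def)
  then show "pair_embedding p q ` {..<4} = {4 * p..<4 * p + 4}"
    by (simp add: add.commute)
  have "pair_embedding p q ` {4..<8} = pair_embedding p q ` plus 4 ` {0..<4}"
    by simp
  also have "\<dots> = plus (4 * q) ` {0..<4}"
    unfolding image_image by (rule image_cong) (auto simp: pair_embedding_def)
  finally show "pair_embedding p q ` {4..<8} = {4 * q..<4 * q + 4}"
    by (simp add: add.commute)
qed

lemma atLeastLessThan_mult_iff_div:
  fixes d p u :: nat
  assumes "0 < d"
  shows "u \<in> {d * p..<d * p + d} \<longleftrightarrow> u div d = p"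
  using assms
  by (metis add.commute atLeastLessThan_iff div_nat_eqI dividend_less_div_times mult.commute
      mult_Suc_right times_div_less_eq_dividend)

text \<open>Block Inl g is the K_17 on group g and the common point 16k; block Inr (p, q) is the
  K_{4,4} between the quarters {4p..<4p+4} and {4q..<4q+4}, which lie in the groups
  p div 4 < q div 4.\<close>

definition blocks :: "nat \<Rightarrow> (nat + nat \<times> nat) set" where
  "blocks k = Inl ` {..<k} \<union> Inr ` {(p, q). p div 4 < q div 4 \<and> q < 4 * k}"

definition block_edges :: "nat \<Rightarrow> nat + nat \<times> nat \<Rightarrow> nat set set" where
  "block_edges k j = (case j of
      Inl g \<Rightarrow> complete_edges (insert (16 * k) {16 * g..<16 * g + 16})
    | Inr (p, q) \<Rightarrow> bipartite_edges {4 * p..<4 * p + 4} {4 * q..<4 * q + 4})"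

definition block_of :: "nat \<Rightarrow> nat \<Rightarrow> nat \<Rightarrow> nat + nat \<times> nat" where
  "block_of k u v = (if v = 16 * k \<or> u div 16 = v div 16 then Inl (u div 16) else Inr (u div 4, v div 4))"

lemma mem_quarter_iff: "u \<in> {4 * p..<4 * p + 4} \<longleftrightarrow> u div 4 = (p::nat)"
  using atLeastLessThan_mult_iff_div[of 4] by simp

lemma mem_group_iff: "u \<in> {16 * g..<16 * g + 16} \<longleftrightarrow> u div 16 = (g::nat)"
  using atLeastLessThan_mult_iff_div[of 16] by simp

lemma div_16_eq: "u div 16 = u div 4 div 4" for u :: nat
  by (simp add: div_mult2_eq)

lemma block_of_in_blocks:
  assumes "u < v" "v \<le> 16 * k"
  shows "block_of k u v \<in> blocks k \<and> {u, v} \<in> block_edges k (block_of k u v)"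
proof (cases "v = 16 * k \<or> u div 16 = v div 16")
  case True
  have "u div 16 < k" using assms by (auto intro: div_less_mono[of u "16 * k", simplified])
  moreover have "u \<in> {16 * (u div 16)..<16 * (u div 16) + 16}"
    "v = 16 * k \<or> v \<in> {16 * (u div 16)..<16 * (u div 16) + 16}"
    using True unfolding mem_group_iff by auto
  ultimately show ?thesis
    using True assms(1) unfolding block_of_def blocks_def block_edges_def
    by (auto simp: doubleton_in_complete_edges)
next
  case False
  then have "v < 16 * k" using assms(2) by simp
  then have "v div 4 < 4 * k" by linarith
  moreover have "u div 4 div 4 < v div 4 div 4"
    using False div_le_mono[OF less_imp_le[OF assms(1)], of 16] unfolding div_16_eq by simp
  ultimately have "Inr (u div 4, v div 4) \<in> blocks k"
    unfolding blocks_def div_16_eq by auto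
  moreover have "u \<in> {4 * (u div 4)..<4 * (u div 4) + 4}" "v \<in> {4 * (v div 4)..<4 * (v div 4) + 4}"
    unfolding mem_quarter_iff by simp_all
  then have "{u, v} \<in> block_edges k (Inr (u div 4, v div 4))"
    unfolding block_edges_def by (simp only: sum.case prod.case doubleton_in_bipartite_edges) blast
  moreover have "block_of k u v = Inr (u div 4, v div 4)"
    using False unfolding block_of_def by simp
  ultimately show ?thesis by simp
qed

lemma block_of_unique:
  assumes j: "j \<in> blocks k" and uv: "u < v" and e: "{u, v} \<in> block_edges k j"
  shows "j = block_of k u v"
proof (cases j)
  case (Inl g)
  then have "g < k" using j unfolding blocks_def by auto
  then have "16 * g + 16 \<le> 16 * k" by simp
  moreover have "u \<in> insert (16 * k) {16 * g..<16 * g + 16}" "v \<in> insert (16 * k) {16 * g..<16 * g + 16}"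
    using e uv Inl unfolding block_edges_def by (simp_all add: doubleton_in_complete_edges)
  ultimately have "u div 16 = g" "v = 16 * k \<or> v div 16 = g"
    using uv unfolding mem_group_iff by auto
  then show ?thesis using Inl unfolding block_of_def by auto
next
  case (Inr pq)
  then obtain p q where pq: "j = Inr (p, q)" "p div 4 < q div 4" "q < 4 * k"
    using j unfolding blocks_def by auto
  have "u \<in> {4 * p..<4 * p + 4} \<and> v \<in> {4 * q..<4 * q + 4} \<or>
      v \<in> {4 * p..<4 * p + 4} \<and> u \<in> {4 * q..<4 * q + 4}"
    using e pq(1) unfolding block_edges_def by (simp add: doubleton_in_bipartite_edges)
  moreover have "4 * p + 4 \<le> 4 * q" using pq(2) by linarith
  ultimately have "u div 4 = p" "v div 4 = q" "v < 16 * k"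
    using uv pq(3) unfolding mem_quarter_iff[symmetric] by auto
  then show ?thesis
    using pq(1,2) unfolding block_of_def div_16_eq by auto
qed

lemma block_edges_subset:
  assumes "j \<in> blocks k"
  shows "block_edges k j \<subseteq> complete_edges {..<16 * k + 1}"
proof (cases j)
  case (Inl g)
  then have "g < k" using assms unfolding blocks_def by auto
  then have "insert (16 * k) {16 * g..<16 * g + 16} \<subseteq> {..<16 * k + 1}" by auto
  then show ?thesis using Inl unfolding block_edges_def by (simp add: complete_edges_mono)
next
  case (Inr pq)
  then obtain p q where pq: "j = Inr (p, q)" "p div 4 < q div 4" "q < 4 * k"
    using assms unfolding blocks_def by auto
  then have "4 * p + 4 \<le> 4 * q" "4 * q + 4 \<le> 16 * k" by linarith+
  then have "{4 * p..<4 * p + 4} \<inter> {4 * q..<4 * q + 4} = {}"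
    "{4 * p..<4 * p + 4} \<union> {4 * q..<4 * q + 4} \<subseteq> {..<16 * k + 1}" by auto
  then show ?thesis
    unfolding pq(1) block_edges_def by (simp only: sum.case prod.case bipartite_edges_subset_complete_edges)
qed

lemma blocks_decomposition: "decomposition (blocks k) (block_edges k) (complete_edges {..<16 * k + 1})"
proof (rule decompositionI)
  show "block_edges k j \<subseteq> complete_edges {..<16 * k + 1}" if "j \<in> blocks k" for j
    using block_edges_subset[OF that] .
  show "\<exists>j\<in>blocks k. e \<in> block_edges k j" if e: "e \<in> complete_edges {..<16 * k + 1}" for e
  proof -
    obtain u v where "u < v" "v < 16 * k + 1" "e = {u, v}"
      using complete_edges_lessThan_ordered[OF e] .
    then show ?thesis using block_of_in_blocks[of u v k] by auto
  qed
  fix j j' e assume j: "j \<in> blocks k" "j' \<in> blocks k"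
    and e: "e \<in> block_edges k j" "e \<in> block_edges k j'"
  obtain u v where "u < v" "e = {u, v}"
    using complete_edges_lessThan_ordered block_edges_subset[OF j(1)] e(1) by blast
  then show "j = j'"
    using block_of_unique j e by metis
qed

lemma hub_block_decomposition:
  assumes "g < k"
  shows "almost_2perfect_decomposition {..<17}
    (\<lambda>c. image (hub_embedding k g) ` cyc_edges (translate 17 c base_cycle))
    (\<lambda>c. image (hub_embedding k g) ` cyc_edges (translate 17 c inside_base_cycle))
    (block_edges k (Inl g))"
proof -
  have "inj_on (hub_embedding k g) (\<Union>(complete_edges {..<17}))"
    using inj_on_hub_embedding[OF assms] Union_complete_edges by (rule inj_on_subset)
  moreover have "image (hub_embedding k g) ` complete_edges {..<17} = block_edges k (Inl g)"
    unfolding image_complete_edges[OF inj_on_hub_embedding[OF assms]] hub_embedding_image[OF assms]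
      block_edges_def by simp
  ultimately show ?thesis
    using almost_2perfect_decomposition_image translates_almost_2perfect_decomposition
      perfect_difference_base_cycles base_cycles_8cycles by metis
qed

lemma pair_block_decomposition:
  assumes "p div 4 < q div 4"
  shows "almost_2perfect_decomposition {..<2}
    (\<lambda>s. image (pair_embedding p q) ` [cyc_edges bipartite_cycle, cyc_edges inside_bipartite_cycle] ! s)
    (\<lambda>s. image (pair_embedding p q) ` [cyc_edges inside_bipartite_cycle, cyc_edges bipartite_cycle] ! s)
    (block_edges k (Inr (p, q)))"
proof -
  have pq: "p < q" using assms by (metis div_le_mono not_le)
  have "\<Union>(bipartite_edges {..<4} {4..<8}) \<subseteq> {..<8::nat}"
    using Union_bipartite_edges[of "{..<4}" "{4..<8}"] by auto
  with inj_on_pair_embedding[OF pq]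
  have "inj_on (pair_embedding p q) (\<Union>(bipartite_edges {..<4} {4..<8}))"
    by (rule inj_on_subset)
  moreover have "image (pair_embedding p q) ` bipartite_edges {..<4} {4..<8} = block_edges k (Inr (p, q))"
    unfolding image_bipartite_edges pair_embedding_image block_edges_def by simp
  ultimately show ?thesis
    using almost_2perfect_decomposition_image[OF almost_2perfect_decomposition_pair[OF
        bipartite_cycles_8cycles bipartite_cycles_union]] by metis
qed

definition block_index :: "nat + nat \<times> nat \<Rightarrow> nat set" where
  "block_index j = (case j of Inl _ \<Rightarrow> {..<17} | Inr _ \<Rightarrow> {..<2})"

definition block_cycle :: "nat \<Rightarrow> nat + nat \<times> nat \<Rightarrow> nat \<Rightarrow> nat set set" where
  "block_cycle k j i = (case j of
      Inl g \<Rightarrow> image (hub_embedding k g) ` cyc_edges (translate 17 i base_cycle)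
    | Inr (p, q) \<Rightarrow>
        image (pair_embedding p q) ` [cyc_edges bipartite_cycle, cyc_edges inside_bipartite_cycle] ! i)"

definition inside_block_cycle :: "nat \<Rightarrow> nat + nat \<times> nat \<Rightarrow> nat \<Rightarrow> nat set set" where
  "inside_block_cycle k j i = (case j of
      Inl g \<Rightarrow> image (hub_embedding k g) ` cyc_edges (translate 17 i inside_base_cycle)
    | Inr (p, q) \<Rightarrow>
        image (pair_embedding p q) ` [cyc_edges inside_bipartite_cycle, cyc_edges bipartite_cycle] ! i)"

lemma block_almost_2perfect_decomposition:
  assumes "j \<in> blocks k"
  shows "almost_2perfect_decomposition (block_index j) (block_cycle k j) (inside_block_cycle k j)
    (block_edges k j)"
proof (cases j)
  case (Inl g)
  then show ?thesis
    using assms hub_block_decomposition[of g k]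
    unfolding blocks_def block_index_def block_cycle_def inside_block_cycle_def by auto
next
  case (Inr pq)
  then show ?thesis
    using assms pair_block_decomposition
    unfolding blocks_def block_index_def block_cycle_def inside_block_cycle_def by auto
qed

lemma complete_graph_almost_2perfect_decomposition:
  "almost_2perfect_decomposition (Sigma (blocks k) block_index)
    (\<lambda>(j, i). block_cycle k j i) (\<lambda>(j, i). inside_block_cycle k j i) (edges_Kn (16 * k + 1))"
  unfolding edges_Kn_eq_complete_edges
  using blocks_decomposition block_almost_2perfect_decomposition
  by (rule almost_2perfect_decomposition_Sigma)

theorem lemma3p1:
  fixes n :: nat
  assumes "n mod 16 = 1" and "n \<ge> 17"
  shows "\<exists>\<C>. is_8cycle_system n \<C> \<and> almost_2perfect n \<C>"
proof -
  have "n = 16 * (n div 16) + 1" using assms(1) div_mult_mod_eq[of n 16] by simp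
  then show ?thesis
    using almost_2perfect_system_of_decomposition[OF
        complete_graph_almost_2perfect_decomposition[of "n div 16"]] by simp
qed

end
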